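(* Let $P\in\{0,1\}^{k\times\ell}$ be a pattern with two rows $r_1\le r_2$ and a column $c$ such that for every $r\in[r_1,r_2]$, $P$ has no 1-entry in row $r$ except possibly $(r,c)$. Suppose moreover $P$ satisfies one of: Type 1: all 1-entries of $P$ above row $r_1$ lie in column $c$ or in row $r_1-1$, and all 1-entries below row $r_2$ lie in column $c$ or in row $r_2+1$; Type 2: all 1-entries above row $r_1$ lie in column $c$ or in row $r_1-1$, and all 1-entries below row $r_2$ lie in $P[(r_2,k]\times[c,\ell]]$; Type 3: all 1-entries above row $r_1$ lie in $P[[1,r_1)\times[c]]$, and all 1-entries below row $r_2$ lie in $P[(r_2,k]\times[c,\ell]]$. Then every 1-entry of $P$ in $[r_1,r_2]\times\{c\}$ is row-bounding.
   Context: All matrices are binary; rows numbered top to bottom, columns left to right; $(i,j)$ is the entry in row $i$, column $j$; $[a,b]=\{a,\dots,b\}$, $[a,b)=[a,b-1]$, $(a,b]=[a+1,b]$, $[n]=[1,n]$; $P[R\times C]$ is the submatrix on rows $R$ and columns $C$. $M\Delta f$ is $M$ with the value of entry $f$ switched. An embedding of $P\in\{0,1\}^{k\times\ell}$ into $M\in\{0,1\}^{m\times n}$ is a map $\phi:[k]\times[\ell]\to[m]\times[n]$ sending 1-entries to 1-entries such that if $e_1=(i_1,j_1)$, $e_2=(i_2,j_2)$ map to $(i_1^*,j_1^* )$, $(i_2^*,j_2^* )$, then $i_1<i_2\Rightarrow i_1^*<i_2^*$ and $j_1<j_2\Rightarrow j_1^*<j_2^*$. $M$ avoids $P$ if no embedding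 exists; $\mathrm{Av}(P)$ is the set of $P$-avoiding matrices. For a 1-entry $e$ of $P$ and $M\in\mathrm{Av}(P)$, a 0-entry $f$ of $M$ is critical for $e$ if some embedding of $P$ into $M\Delta f$ maps $e$ to $f$; a horizontal 0-run (maximal run of consecutive 0-entries in a row) is critical for $e$ if it contains a 0-entry critical for $e$. $e$ is row-bounding if there is a constant $K$ such that for every $M\in\mathrm{Av}(P)$ every row of $M$ contains at most $K$ horizontal 0-runs critical for $e$. *)

theory Defs
  imports Main
begin

text \<open>A binary matrix of size m x n is represented by its entry function
  M :: nat \<Rightarrow> nat \<Rightarrow> bool (True = 1-entry), indices 1-based;
  only entries in [1,m] x [1,n] are relevant.\<close>

definition entries :: "nat \<Rightarrow> nat \<Rightarrow> (nat \<times> nat) set" where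
  "entries m n = {1..m} \<times> {1..n}"

definition switch :: "(nat \<Rightarrow> nat \<Rightarrow> bool) \<Rightarrow> nat \<times> nat \<Rightarrow> (nat \<Rightarrow> nat \<Rightarrow> bool)" where
  "switch M f = (\<lambda>i j. if (i, j) = f then \<not> M i j else M i j)"

definition is_embedding ::
  "nat \<Rightarrow> nat \<Rightarrow> (nat \<Rightarrow> nat \<Rightarrow> bool) \<Rightarrow> nat \<Rightarrow> nat \<Rightarrow> (nat \<Rightarrow> nat \<Rightarrow> bool)
   \<Rightarrow> (nat \<times> nat \<Rightarrow> nat \<times> nat) \<Rightarrow> bool" where
  "is_embedding k l P m n M \<phi> \<longleftrightarrow>
     (\<forall>e\<in>entries k l. \<phi> e \<in> entries m n) \<and>
     (\<forall>e\<in>entries k l. P (fst e) (snd e) \<longrightarrow> M (fst (\<phi> e)) (snd (\<phi> e))) \<and>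
     (\<forall>e1\<in>entries k l. \<forall>e2\<in>entries k l.
        (fst e1 < fst e2 \<longrightarrow> fst (\<phi> e1) < fst (\<phi> e2)) \<and>
        (snd e1 < snd e2 \<longrightarrow> snd (\<phi> e1) < snd (\<phi> e2)))"

definition avoids ::
  "nat \<Rightarrow> nat \<Rightarrow> (nat \<Rightarrow> nat \<Rightarrow> bool) \<Rightarrow> nat \<Rightarrow> nat \<Rightarrow> (nat \<Rightarrow> nat \<Rightarrow> bool) \<Rightarrow> bool" where
  "avoids k l P m n M \<longleftrightarrow> \<not> (\<exists>\<phi>. is_embedding k l P m n M \<phi>)"

definition critical_entry ::
  "nat \<Rightarrow> nat \<Rightarrow> (nat \<Rightarrow> nat \<Rightarrow> bool) \<Rightarrow> nat \<times> nat \<Rightarrow> nat \<Rightarrow> nat \<Rightarrow> (nat \<Rightarrow> nat \<Rightarrow> bool)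
   \<Rightarrow> nat \<times> nat \<Rightarrow> bool" where
  "critical_entry k l P e m n M f \<longleftrightarrow>
     f \<in> entries m n \<and> \<not> M (fst f) (snd f) \<and>
     (\<exists>\<phi>. is_embedding k l P m n (switch M f) \<phi> \<and> \<phi> e = f)"

definition hzero_run :: "nat \<Rightarrow> nat \<Rightarrow> (nat \<Rightarrow> nat \<Rightarrow> bool) \<Rightarrow> nat \<Rightarrow> nat \<Rightarrow> nat \<Rightarrow> bool" where
  "hzero_run m n M i a b \<longleftrightarrow>
     i \<in> {1..m} \<and> 1 \<le> a \<and> a \<le> b \<and> b \<le> n \<and>
     (\<forall>j\<in>{a..b}. \<not> M i j) \<and>
     (a = 1 \<or> M i (a - 1)) \<and> (b = n \<or> M i (b + 1))"

definition critical_runs ::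
  "nat \<Rightarrow> nat \<Rightarrow> (nat \<Rightarrow> nat \<Rightarrow> bool) \<Rightarrow> nat \<times> nat \<Rightarrow> nat \<Rightarrow> nat \<Rightarrow> (nat \<Rightarrow> nat \<Rightarrow> bool)
   \<Rightarrow> nat \<Rightarrow> (nat \<times> nat) set" where
  "critical_runs k l P e m n M i =
     {(a, b). hzero_run m n M i a b \<and> (\<exists>j\<in>{a..b}. critical_entry k l P e m n M (i, j))}"

definition row_bounding ::
  "nat \<Rightarrow> nat \<Rightarrow> (nat \<Rightarrow> nat \<Rightarrow> bool) \<Rightarrow> nat \<times> nat \<Rightarrow> bool" where
  "row_bounding k l P e \<longleftrightarrow>
     (\<exists>K::nat. \<forall>m n M. avoids k l P m n M \<longrightarrow>
        (\<forall>i\<in>{1..m}. card (critical_runs k l P e m n M i) \<le> K))"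

end

theory Submission
  imports Defs
begin

text \<open>
  An embedding of P into M amounts to row cuts \<rho> and column cuts \<gamma> (strictly increasing,
  bounded by the size of M) such that every 1-entry (a, b) of P has a 1-entry of M in the block
  (\<rho> (a - 1), \<rho> a] \<times> (\<gamma> (b - 1), \<gamma> b].

  Two distinct critical runs for e = (r, c) in row i of M give critical 0-entries (i, j1) and
  (i, j2) separated by a 1-entry (i, g), j1 < g < j2. The grids of the two embeddings into the
  switched matrices witness all 1-entries of P except e, and have an all-zero block at e.
  Taking the column cuts of the first grid left of c and of the second from c on, the block of
  column c contains g. Since the rows r1..r2 carry 1-entries only in column c, row cuts can be
  assembled from the two grids (pointwise minima and maxima, switching at rows r1 - 1 and r2 + 1
  where a row needs both grids) so that every row block contains the block of a grid witnessing
  the 1-entries of that row, and the block of row r contains i. Sending e to (i, g) then embeds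
  P into M, a contradiction: each row has at most one critical run.
\<close>

definition cut_seq :: "nat \<Rightarrow> nat \<Rightarrow> (nat \<Rightarrow> nat) \<Rightarrow> bool" where
  "cut_seq k m \<rho> \<longleftrightarrow> (\<forall>a\<in>{1..k}. \<rho> (a - 1) < \<rho> a) \<and> \<rho> k \<le> m"

definition in_block :: "(nat \<Rightarrow> nat) \<Rightarrow> (nat \<Rightarrow> nat) \<Rightarrow> nat \<Rightarrow> nat \<Rightarrow> nat \<times> nat \<Rightarrow> bool" where
  "in_block \<rho> \<gamma> a b x \<longleftrightarrow>
     \<rho> (a - 1) < fst x \<and> fst x \<le> \<rho> a \<and> \<gamma> (b - 1) < snd x \<and> snd x \<le> \<gamma> b"

definition grid_witnesses ::
  "nat \<Rightarrow> nat \<Rightarrow> (nat \<Rightarrow> nat \<Rightarrow> bool) \<Rightarrow> (nat \<Rightarrow> nat \<Rightarrow> bool) \<Rightarrow> (nat \<Rightarrow> nat) \<Rightarrow> (nat \<Rightarrow> nat) \<Rightarrow> bool" where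
  "grid_witnesses k l P M \<rho> \<gamma> \<longleftrightarrow>
     (\<forall>a\<in>{1..k}. \<forall>b\<in>{1..l}. P a b \<longrightarrow> (\<exists>x. in_block \<rho> \<gamma> a b x \<and> M (fst x) (snd x)))"

lemma cut_seq_less: "cut_seq k m \<rho> \<Longrightarrow> 1 \<le> a \<Longrightarrow> a \<le> k \<Longrightarrow> \<rho> (a - 1) < \<rho> a"
  unfolding cut_seq_def by auto

lemma cut_seq_mono:
  assumes "cut_seq k m \<rho>" "a \<le> a'" "a' \<le> k"
  shows "\<rho> a \<le> \<rho> a'"
  using assms(2)
proof (induction a' rule: dec_induct)
  case (step a'')
  then show ?case using cut_seq_less[OF assms(1), of "Suc a''"] assms(3) by simp
qed simp

lemma cut_seq_le_bound: "cut_seq k m \<rho> \<Longrightarrow> a \<le> k \<Longrightarrow> \<rho> a \<le> m"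
  using cut_seq_mono[of k m \<rho> a k] unfolding cut_seq_def by auto

lemma in_block_order:
  assumes \<rho>: "cut_seq k m \<rho>" and \<gamma>: "cut_seq l n \<gamma>"
    and x: "in_block \<rho> \<gamma> a b x" and y: "in_block \<rho> \<gamma> a' b' y" and "a' \<le> k" "b' \<le> l"
  shows "(a < a' \<longrightarrow> fst x < fst y) \<and> (b < b' \<longrightarrow> snd x < snd y)"
proof (intro conjI impI)
  assume "a < a'"
  then have "\<rho> a \<le> \<rho> (a' - 1)" using cut_seq_mono[OF \<rho>, of a "a' - 1"] \<open>a' \<le> k\<close> by simp
  then show "fst x < fst y" using x y unfolding in_block_def by simp
next
  assume "b < b'"
  then have "\<gamma> b \<le> \<gamma> (b' - 1)" using cut_seq_mono[OF \<gamma>, of b "b' - 1"] \<open>b' \<le> l\<close> by simp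
  then show "snd x < snd y" using x y unfolding in_block_def by simp
qed

lemma embedding_of_grid:
  assumes \<rho>: "cut_seq k m \<rho>" and \<gamma>: "cut_seq l n \<gamma>" and W: "grid_witnesses k l P M \<rho> \<gamma>"
  shows "\<exists>\<phi>. is_embedding k l P m n M \<phi>"
proof -
  define \<phi> where "\<phi> e = (if P (fst e) (snd e)
      then (SOME x. in_block \<rho> \<gamma> (fst e) (snd e) x \<and> M (fst x) (snd x)) else (\<rho> (fst e), \<gamma> (snd e)))"
    for e
  have blk: "in_block \<rho> \<gamma> (fst e) (snd e) (\<phi> e)"
    and one: "P (fst e) (snd e) \<Longrightarrow> M (fst (\<phi> e)) (snd (\<phi> e))"
    if e: "e \<in> entries k l" for e
  proof -
    have "\<rho> (fst e - 1) < \<rho> (fst e)" "\<gamma> (snd e - 1) < \<gamma> (snd e)"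
      using cut_seq_less[OF \<rho>] cut_seq_less[OF \<gamma>] e by (auto simp: entries_def)
    moreover have "P (fst e) (snd e) \<Longrightarrow>
        in_block \<rho> \<gamma> (fst e) (snd e) (\<phi> e) \<and> M (fst (\<phi> e)) (snd (\<phi> e))"
      using W e someI_ex[of "\<lambda>x. in_block \<rho> \<gamma> (fst e) (snd e) x \<and> M (fst x) (snd x)"]
      unfolding grid_witnesses_def \<phi>_def by (auto simp: entries_def)
    ultimately show "in_block \<rho> \<gamma> (fst e) (snd e) (\<phi> e)"
      "P (fst e) (snd e) \<Longrightarrow> M (fst (\<phi> e)) (snd (\<phi> e))"
      unfolding \<phi>_def in_block_def by auto
  qed
  have "is_embedding k l P m n M \<phi>"
    unfolding is_embedding_def
  proof (intro conjI ballI impI)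
    fix e assume e: "e \<in> entries k l"
    show "\<phi> e \<in> entries m n"
      using blk[OF e] e cut_seq_le_bound[OF \<rho>, of "fst e"] cut_seq_le_bound[OF \<gamma>, of "snd e"]
      unfolding in_block_def entries_def by (cases "\<phi> e") auto
    show "P (fst e) (snd e) \<Longrightarrow> M (fst (\<phi> e)) (snd (\<phi> e))" by (rule one[OF e])
  next
    fix e1 e2 assume e1: "e1 \<in> entries k l" and e2: "e2 \<in> entries k l"
    then show "fst e1 < fst e2 \<Longrightarrow> fst (\<phi> e1) < fst (\<phi> e2)"
      and "snd e1 < snd e2 \<Longrightarrow> snd (\<phi> e1) < snd (\<phi> e2)"
      using in_block_order[OF \<rho> \<gamma> blk[OF e1] blk[OF e2]] by (auto simp: entries_def)
  qed
  then show ?thesis by blast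
qed

lemma cut_seq_separating:
  fixes x :: "nat \<Rightarrow> nat \<Rightarrow> nat"
  assumes l: "1 \<le> l"
    and bound: "\<forall>a\<in>{1..k}. \<forall>b\<in>{1..l}. 1 \<le> x a b \<and> x a b \<le> m"
    and mono: "\<forall>a\<in>{1..k}. \<forall>a'\<in>{1..k}. \<forall>b\<in>{1..l}. \<forall>b'\<in>{1..l}. a < a' \<longrightarrow> x a b < x a' b'"
  obtains \<rho> where "cut_seq k m \<rho>"
    and "\<And>a b. a \<in> {1..k} \<Longrightarrow> b \<in> {1..l} \<Longrightarrow> \<rho> (a - 1) < x a b \<and> x a b \<le> \<rho> a"
proof -
  define \<rho> where "\<rho> a = (if a = 0 then 0 else Max (x a ` {1..l}))" for a
  have attained: "\<exists>b\<in>{1..l}. \<rho> a = x a b" if "1 \<le> a" for a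
  proof -
    have "Max (x a ` {1..l}) \<in> x a ` {1..l}" by (rule Max_in) (use l in auto)
    then show ?thesis using that unfolding \<rho>_def by auto
  qed
  have upper: "x a b \<le> \<rho> a" if "a \<in> {1..k}" "b \<in> {1..l}" for a b
    using that unfolding \<rho>_def by (auto intro: Max_ge)
  have lower: "\<rho> (a - 1) < x a b" if a: "a \<in> {1..k}" and b: "b \<in> {1..l}" for a b
  proof (cases "a = 1")
    case True
    then show ?thesis using bspec[OF bspec[OF bound a] b] unfolding \<rho>_def by simp
  next
    case False
    with a have "a - 1 \<in> {1..k}" by auto
    moreover obtain b' where "b' \<in> {1..l}" "\<rho> (a - 1) = x (a - 1) b'"
      using attained[of "a - 1"] \<open>a - 1 \<in> {1..k}\<close> by auto
    ultimately show ?thesis using mono a b by simp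
  qed
  have "cut_seq k m \<rho>"
    unfolding cut_seq_def
  proof (intro conjI ballI)
    show "\<rho> (a - 1) < \<rho> a" if "a \<in> {1..k}" for a
      using lower[OF that, of 1] upper[OF that, of 1] l by fastforce
    show "\<rho> k \<le> m"
    proof (cases "k = 0")
      case False
      then obtain b where "b \<in> {1..l}" "\<rho> k = x k b" using attained[of k] by auto
      then show ?thesis using bspec[OF bspec[OF bound] \<open>b \<in> {1..l}\<close>, of k] False by simp
    qed (simp add: \<rho>_def)
  qed
  then show ?thesis by (rule that) (blast intro: upper lower)
qed

lemma grid_of_embedding:
  assumes E: "is_embedding k l P m n M \<phi>" and kl: "1 \<le> k" "1 \<le> l"
  obtains \<rho> \<gamma> where "cut_seq k m \<rho>" "cut_seq l n \<gamma>"
    and "\<And>a b. a \<in> {1..k} \<Longrightarrow> b \<in> {1..l} \<Longrightarrow> in_block \<rho> \<gamma> a b (\<phi> (a, b))"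
proof -
  have order: "(a < a' \<longrightarrow> fst (\<phi> (a, b)) < fst (\<phi> (a', b'))) \<and>
      (b < b' \<longrightarrow> snd (\<phi> (a, b)) < snd (\<phi> (a', b')))"
    if "a \<in> {1..k}" "b \<in> {1..l}" "a' \<in> {1..k}" "b' \<in> {1..l}" for a b a' b'
    using E that unfolding is_embedding_def entries_def by (metis fst_conv mem_Sigma_iff snd_conv)
  have inside: "\<phi> (a, b) \<in> entries m n" if "a \<in> {1..k}" "b \<in> {1..l}" for a b
    using E that unfolding is_embedding_def entries_def by auto
  obtain \<rho> where \<rho>: "cut_seq k m \<rho>"
    and rows: "\<And>a b. a \<in> {1..k} \<Longrightarrow> b \<in> {1..l} \<Longrightarrow>
                 \<rho> (a - 1) < fst (\<phi> (a, b)) \<and> fst (\<phi> (a, b)) \<le> \<rho> a"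
  proof (rule cut_seq_separating[OF kl(2)])
    show "\<forall>a\<in>{1..k}. \<forall>b\<in>{1..l}. 1 \<le> fst (\<phi> (a, b)) \<and> fst (\<phi> (a, b)) \<le> m"
      using inside by (auto simp: entries_def mem_Times_iff)
    show "\<forall>a\<in>{1..k}. \<forall>a'\<in>{1..k}. \<forall>b\<in>{1..l}. \<forall>b'\<in>{1..l}.
        a < a' \<longrightarrow> fst (\<phi> (a, b)) < fst (\<phi> (a', b'))"
      using order by blast
  qed (rule that)
  obtain \<gamma> where \<gamma>: "cut_seq l n \<gamma>"
    and cols: "\<And>b a. b \<in> {1..l} \<Longrightarrow> a \<in> {1..k} \<Longrightarrow>
                 \<gamma> (b - 1) < snd (\<phi> (a, b)) \<and> snd (\<phi> (a, b)) \<le> \<gamma> b"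
  proof (rule cut_seq_separating[OF kl(1)])
    show "\<forall>b\<in>{1..l}. \<forall>a\<in>{1..k}. 1 \<le> snd (\<phi> (a, b)) \<and> snd (\<phi> (a, b)) \<le> n"
      using inside by (auto simp: entries_def mem_Times_iff)
    show "\<forall>b\<in>{1..l}. \<forall>b'\<in>{1..l}. \<forall>a\<in>{1..k}. \<forall>a'\<in>{1..k}.
        b < b' \<longrightarrow> snd (\<phi> (a, b)) < snd (\<phi> (a', b'))"
      using order by blast
  qed (rule that)
  show ?thesis
    by (rule that[OF \<rho> \<gamma>]) (use rows cols in \<open>auto simp: in_block_def\<close>)
qed

definition critical_grid ::
  "nat \<Rightarrow> nat \<Rightarrow> (nat \<Rightarrow> nat \<Rightarrow> bool) \<Rightarrow> nat \<times> nat \<Rightarrow> nat \<Rightarrow> nat \<Rightarrow> (nat \<Rightarrow> nat \<Rightarrow> bool)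
   \<Rightarrow> nat \<times> nat \<Rightarrow> (nat \<Rightarrow> nat) \<Rightarrow> (nat \<Rightarrow> nat) \<Rightarrow> bool" where
  "critical_grid k l P e m n M f \<rho> \<gamma> \<longleftrightarrow>
     cut_seq k m \<rho> \<and> cut_seq l n \<gamma> \<and> in_block \<rho> \<gamma> (fst e) (snd e) f \<and>
     grid_witnesses k l (\<lambda>a b. P a b \<and> (a, b) \<noteq> e) M \<rho> \<gamma> \<and>
     (\<forall>x. in_block \<rho> \<gamma> (fst e) (snd e) x \<longrightarrow> \<not> M (fst x) (snd x))"

lemma critical_entry_grid:
  assumes av: "avoids k l P m n M" and cr: "critical_entry k l P e m n M f"
    and e: "e \<in> entries k l"
  shows "\<exists>\<rho> \<gamma>. critical_grid k l P e m n M f \<rho> \<gamma>"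
proof -
  obtain \<phi> where emb: "is_embedding k l P m n (switch M f) \<phi>" and \<phi>e: "\<phi> e = f"
    using cr unfolding critical_entry_def by auto
  have kl: "1 \<le> k" "1 \<le> l" using e by (auto simp: entries_def)
  obtain \<rho> \<gamma> where \<rho>: "cut_seq k m \<rho>" and \<gamma>: "cut_seq l n \<gamma>"
    and blocks: "\<And>a b. a \<in> {1..k} \<Longrightarrow> b \<in> {1..l} \<Longrightarrow> in_block \<rho> \<gamma> a b (\<phi> (a, b))"
    using grid_of_embedding[OF emb kl] by blast
  have f_block: "in_block \<rho> \<gamma> (fst e) (snd e) f"
    using blocks e \<phi>e by (auto simp: entries_def)
  have W: "grid_witnesses k l (\<lambda>a b. P a b \<and> (a, b) \<noteq> e) M \<rho> \<gamma>"
    unfolding grid_witnesses_def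
  proof (intro ballI impI)
    fix a b assume a: "a \<in> {1..k}" and b: "b \<in> {1..l}" and ab: "P a b \<and> (a, b) \<noteq> e"
    have "\<phi> (a, b) \<noteq> \<phi> e"
      using emb ab a b e unfolding is_embedding_def entries_def
      by (metis mem_Sigma_iff nat_neq_iff prod.collapse prod.inject)
    moreover have "switch M f (fst (\<phi> (a, b))) (snd (\<phi> (a, b)))"
      using emb ab a b unfolding is_embedding_def entries_def by auto
    ultimately have "M (fst (\<phi> (a, b))) (snd (\<phi> (a, b)))"
      using \<phi>e unfolding switch_def by (auto split: if_splits)
    then show "\<exists>x. in_block \<rho> \<gamma> a b x \<and> M (fst x) (snd x)" using blocks a b by blast
  qed
  have "\<not> M (fst x) (snd x)" if x: "in_block \<rho> \<gamma> (fst e) (snd e) x" for x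
  proof
    assume "M (fst x) (snd x)"
    with W x have "grid_witnesses k l P M \<rho> \<gamma>"
      unfolding grid_witnesses_def by (metis prod.collapse split_pairs)
    with embedding_of_grid[OF \<rho> \<gamma>] av show False unfolding avoids_def by blast
  qed
  with \<rho> \<gamma> f_block W show ?thesis unfolding critical_grid_def by blast
qed

definition interval_subset :: "(nat \<Rightarrow> nat) \<Rightarrow> (nat \<Rightarrow> nat) \<Rightarrow> nat \<Rightarrow> bool" where
  "interval_subset \<rho>' \<rho> a \<longleftrightarrow> \<rho> (a - 1) \<le> \<rho>' (a - 1) \<and> \<rho>' a \<le> \<rho> a"

lemma in_block_interval_subset:
  "in_block \<rho>' \<gamma>' a b x \<Longrightarrow> interval_subset \<rho>' \<rho> a \<Longrightarrow> interval_subset \<gamma>' \<gamma> b \<Longrightarrow>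
   in_block \<rho> \<gamma> a b x"
  unfolding in_block_def interval_subset_def by auto

definition glue_cuts :: "nat \<Rightarrow> (nat \<Rightarrow> nat) \<Rightarrow> (nat \<Rightarrow> nat) \<Rightarrow> nat \<Rightarrow> nat" where
  "glue_cuts h \<rho>1 \<rho>2 a = (if a < h then \<rho>1 a else \<rho>2 a)"

lemma cut_seq_glue_cuts:
  assumes "cut_seq k m \<rho>1" "cut_seq k m \<rho>2" "\<rho>1 (h - 1) < \<rho>2 h"
  shows "cut_seq k m (glue_cuts h \<rho>1 \<rho>2)"
  unfolding cut_seq_def
proof (intro conjI ballI)
  fix a assume "a \<in> {1..k}"
  then show "glue_cuts h \<rho>1 \<rho>2 (a - 1) < glue_cuts h \<rho>1 \<rho>2 a"
    using assms cut_seq_less[OF assms(1), of a] cut_seq_less[OF assms(2), of a]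
    unfolding glue_cuts_def by (cases "a < h"; cases "a = h") auto
next
  show "glue_cuts h \<rho>1 \<rho>2 k \<le> m"
    using assms unfolding cut_seq_def glue_cuts_def by auto
qed

lemma interval_subset_glue_cuts_below:
  "a < h \<Longrightarrow> interval_subset \<rho>' (glue_cuts h \<rho>1 \<rho>2) a = interval_subset \<rho>' \<rho>1 a"
  unfolding interval_subset_def glue_cuts_def by auto

lemma interval_subset_glue_cuts_above:
  "h < a \<Longrightarrow> interval_subset \<rho>' (glue_cuts h \<rho>1 \<rho>2) a = interval_subset \<rho>' \<rho>2 a"
  unfolding interval_subset_def glue_cuts_def by auto

definition min_max_cuts :: "nat \<Rightarrow> (nat \<Rightarrow> nat) \<Rightarrow> (nat \<Rightarrow> nat) \<Rightarrow> nat \<Rightarrow> nat" where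
  "min_max_cuts h \<rho>1 \<rho>2 a = (if a < h then min (\<rho>1 a) (\<rho>2 a) else max (\<rho>1 a) (\<rho>2 a))"

lemma cut_seq_min_max_cuts:
  assumes "cut_seq k m \<rho>1" "cut_seq k m \<rho>2"
  shows "cut_seq k m (min_max_cuts h \<rho>1 \<rho>2)"
  using assms unfolding cut_seq_def min_max_cuts_def
  by (auto simp: min_def max_def)

lemma interval_subset_min_max_cuts:
  "interval_subset \<rho>1 (min_max_cuts h \<rho>1 \<rho>2) a \<or> interval_subset \<rho>2 (min_max_cuts h \<rho>1 \<rho>2) a"
  unfolding interval_subset_def min_max_cuts_def by (auto simp: min_def max_def)

lemma interval_subset_min_max_cuts_switch:
  "1 \<le> h \<Longrightarrow>
   interval_subset \<rho>1 (min_max_cuts h \<rho>1 \<rho>2) h \<and> interval_subset \<rho>2 (min_max_cuts h \<rho>1 \<rho>2) h"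
  unfolding interval_subset_def min_max_cuts_def by auto

lemma merged_column_cuts:
  assumes S: "cut_seq l n \<gamma>s" and T: "cut_seq l n \<gamma>t" and c: "1 \<le> c" "c \<le> l"
    and g: "\<gamma>s c < g" "g \<le> \<gamma>t (c - 1)"
  obtains \<gamma> where "cut_seq l n \<gamma>" "\<gamma> (c - 1) < g" "g \<le> \<gamma> c"
    and "\<And>b. b \<le> c \<Longrightarrow> interval_subset \<gamma>s \<gamma> b"
    and "\<And>b. c \<le> b \<Longrightarrow> 1 \<le> b \<Longrightarrow> interval_subset \<gamma>t \<gamma> b"
proof
  have steps: "\<gamma>s (c - 1) < \<gamma>s c" "\<gamma>t (c - 1) < \<gamma>t c"
    using cut_seq_less[OF S] cut_seq_less[OF T] c by auto
  show "cut_seq l n (glue_cuts c \<gamma>s \<gamma>t)"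
    using S T steps g by (intro cut_seq_glue_cuts) auto
  show "glue_cuts c \<gamma>s \<gamma>t (c - 1) < g" "g \<le> glue_cuts c \<gamma>s \<gamma>t c"
    using steps g c unfolding glue_cuts_def by auto
  show "interval_subset \<gamma>s (glue_cuts c \<gamma>s \<gamma>t) b" if "b \<le> c" for b
    using that steps g unfolding interval_subset_def glue_cuts_def by auto
  show "interval_subset \<gamma>t (glue_cuts c \<gamma>s \<gamma>t) b" if "c \<le> b" "1 \<le> b" for b
    using that steps g unfolding interval_subset_def glue_cuts_def by (cases "b = c") auto
qed

lemma merged_critical_grids_not_avoids:
  assumes S: "critical_grid k l P (r, c) m n M (i, j1) \<rho>s \<gamma>s"
    and T: "critical_grid k l P (r, c) m n M (i, j2) \<rho>t \<gamma>t"
    and c: "1 \<le> c" "c \<le> l"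
    and g: "j1 < g" "g < j2" "M i g"
    and \<rho>: "cut_seq k m \<rho>" "\<rho> (r - 1) < i" "i \<le> \<rho> r"
    and covered: "\<forall>a\<in>{1..k}. \<forall>b\<in>{1..l}. P a b \<and> (a, b) \<noteq> (r, c) \<longrightarrow>
       (interval_subset \<rho>s \<rho> a \<and> b \<le> c) \<or> (interval_subset \<rho>t \<rho> a \<and> c \<le> b)"
  shows "\<not> avoids k l P m n M"
proof -
  have "in_block \<rho>s \<gamma>s r c (i, j1)" "in_block \<rho>t \<gamma>t r c (i, j2)"
    and "\<not> in_block \<rho>s \<gamma>s r c (i, g)" "\<not> in_block \<rho>t \<gamma>t r c (i, g)"
    using S T g(3) unfolding critical_grid_def by auto
  then have g_between: "\<gamma>s c < g" "g \<le> \<gamma>t (c - 1)"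
    using g unfolding in_block_def by auto
  have cuts: "cut_seq l n \<gamma>s" "cut_seq l n \<gamma>t" using S T by (simp_all add: critical_grid_def)
  obtain \<gamma> where \<gamma>: "cut_seq l n \<gamma>" "\<gamma> (c - 1) < g" "g \<le> \<gamma> c"
    and left: "\<And>b. b \<le> c \<Longrightarrow> interval_subset \<gamma>s \<gamma> b"
    and right: "\<And>b. c \<le> b \<Longrightarrow> 1 \<le> b \<Longrightarrow> interval_subset \<gamma>t \<gamma> b"
    using merged_column_cuts[OF cuts c g_between] by blast
  have "grid_witnesses k l P M \<rho> \<gamma>"
    unfolding grid_witnesses_def
  proof (intro ballI impI)
    fix a b assume a: "a \<in> {1..k}" and b: "b \<in> {1..l}" and "P a b"
    show "\<exists>x. in_block \<rho> \<gamma> a b x \<and> M (fst x) (snd x)"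
    proof (cases "(a, b) = (r, c)")
      case True
      then have "in_block \<rho> \<gamma> a b (i, g)" using \<rho> \<gamma> unfolding in_block_def by auto
      with g(3) show ?thesis by auto
    next
      case False
      with covered a b \<open>P a b\<close> consider
          "interval_subset \<rho>s \<rho> a" "interval_subset \<gamma>s \<gamma> b"
        | "interval_subset \<rho>t \<rho> a" "interval_subset \<gamma>t \<gamma> b"
        using left right by fastforce
      then show ?thesis
      proof cases
        case 1
        from S a b \<open>P a b\<close> False obtain x where "in_block \<rho>s \<gamma>s a b x" "M (fst x) (snd x)"
          unfolding critical_grid_def grid_witnesses_def by blast
        with 1 show ?thesis by (blast intro: in_block_interval_subset)
      next
        case 2
        from T a b \<open>P a b\<close> False obtain x where "in_block \<rho>t \<gamma>t a b x" "M (fst x) (snd x)"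
          unfolding critical_grid_def grid_witnesses_def by blast
        with 2 show ?thesis by (blast intro: in_block_interval_subset)
      qed
    qed
  qed
  with embedding_of_grid \<rho>(1) \<gamma>(1) show ?thesis unfolding avoids_def by blast
qed

lemma merged_row_cuts:
  assumes S: "cut_seq k m \<rho>s" "\<rho>s (r - 1) < i" "i \<le> \<rho>s r"
    and T: "cut_seq k m \<rho>t" "\<rho>t (r - 1) < i" "i \<le> \<rho>t r"
    and r: "1 \<le> r"
  obtains \<rho> where "cut_seq k m \<rho>" "\<rho> (r - 1) < i" "i \<le> \<rho> r"
    and "\<And>a. a \<noteq> r \<Longrightarrow> interval_subset \<rho>s \<rho> a \<or> interval_subset \<rho>t \<rho> a"
    and "\<And>a. top_left \<Longrightarrow> a < r \<Longrightarrow> interval_subset \<rho>s \<rho> a"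
    and "\<not> top_left \<Longrightarrow> 1 \<le> h_top \<Longrightarrow> h_top < r \<Longrightarrow>
           interval_subset \<rho>s \<rho> h_top \<and> interval_subset \<rho>t \<rho> h_top"
    and "\<And>a. bottom_right \<Longrightarrow> r < a \<Longrightarrow> interval_subset \<rho>t \<rho> a"
    and "\<not> bottom_right \<Longrightarrow> r < h_bot \<Longrightarrow>
           interval_subset \<rho>s \<rho> h_bot \<and> interval_subset \<rho>t \<rho> h_bot"
proof -
  define \<tau> where "\<tau> = (if top_left then \<rho>s else min_max_cuts h_top \<rho>s \<rho>t)"
  define \<beta> where "\<beta> = (if bottom_right then \<rho>t else min_max_cuts h_bot \<rho>s \<rho>t)"
  have self_subset: "interval_subset \<rho>' \<rho>' a" for \<rho>' a
    unfolding interval_subset_def by simp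
  have \<tau>_cuts: "cut_seq k m \<tau>" and \<beta>_cuts: "cut_seq k m \<beta>"
    unfolding \<tau>_def \<beta>_def using S(1) T(1) by (auto intro: cut_seq_min_max_cuts)
  have "\<tau> (r - 1) < i" "i \<le> \<beta> r"
    using S T unfolding \<tau>_def \<beta>_def min_max_cuts_def by auto
  have \<tau>_one: "interval_subset \<rho>s \<tau> a \<or> interval_subset \<rho>t \<tau> a"
    and \<beta>_one: "interval_subset \<rho>s \<beta> a \<or> interval_subset \<rho>t \<beta> a" for a
    unfolding \<tau>_def \<beta>_def using self_subset interval_subset_min_max_cuts by auto
  define \<rho> where "\<rho> = glue_cuts r \<tau> \<beta>"
  show ?thesis
  proof (rule that)
    show "cut_seq k m \<rho>"
      unfolding \<rho>_def using \<tau>_cuts \<beta>_cuts \<open>\<tau> (r - 1) < i\<close> \<open>i \<le> \<beta> r\<close>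
      by (auto intro: cut_seq_glue_cuts)
    show "\<rho> (r - 1) < i" "i \<le> \<rho> r"
      unfolding \<rho>_def glue_cuts_def using r \<open>\<tau> (r - 1) < i\<close> \<open>i \<le> \<beta> r\<close> by auto
    show "interval_subset \<rho>s \<rho> a \<or> interval_subset \<rho>t \<rho> a" if "a \<noteq> r" for a
      using that \<tau>_one \<beta>_one unfolding \<rho>_def
      by (cases "a < r") (auto simp: interval_subset_glue_cuts_below interval_subset_glue_cuts_above)
    show "interval_subset \<rho>s \<rho> a" if "top_left" "a < r" for a
      using that self_subset unfolding \<rho>_def \<tau>_def by (simp add: interval_subset_glue_cuts_below)
    show "interval_subset \<rho>s \<rho> h_top \<and> interval_subset \<rho>t \<rho> h_top"
      if "\<not> top_left" "1 \<le> h_top" "h_top < r"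
      using that interval_subset_min_max_cuts_switch unfolding \<rho>_def \<tau>_def
      by (simp add: interval_subset_glue_cuts_below)
    show "interval_subset \<rho>t \<rho> a" if "bottom_right" "r < a" for a
      using that self_subset unfolding \<rho>_def \<beta>_def by (simp add: interval_subset_glue_cuts_above)
    show "interval_subset \<rho>s \<rho> h_bot \<and> interval_subset \<rho>t \<rho> h_bot"
      if "\<not> bottom_right" "r < h_bot"
      using that interval_subset_min_max_cuts_switch[of h_bot] unfolding \<rho>_def \<beta>_def
      by (simp add: interval_subset_glue_cuts_above)
  qed
qed

lemma covering_row_cuts:
  fixes P :: "nat \<Rightarrow> nat \<Rightarrow> bool"
  assumes S: "cut_seq k m \<rho>s" "\<rho>s (r - 1) < i" "i \<le> \<rho>s r"
    and T: "cut_seq k m \<rho>t" "\<rho>t (r - 1) < i" "i \<le> \<rho>t r"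
    and rows: "1 \<le> r1" "r1 \<le> r" "r \<le> r2"
    and band: "\<forall>a\<in>{r1..r2}. \<forall>b\<in>{1..l}. P a b \<longrightarrow> b = c"
    and top: "\<forall>a\<in>{1..k}. \<forall>b\<in>{1..l}. P a b \<longrightarrow> a < r1 \<longrightarrow>
                (if top_left then b \<le> c else b = c \<or> a = r1 - 1)"
    and bottom: "\<forall>a\<in>{1..k}. \<forall>b\<in>{1..l}. P a b \<longrightarrow> r2 < a \<longrightarrow>
                (if bottom_right then c \<le> b else b = c \<or> a = r2 + 1)"
  obtains \<rho> where "cut_seq k m \<rho>" "\<rho> (r - 1) < i" "i \<le> \<rho> r"
    and "\<forall>a\<in>{1..k}. \<forall>b\<in>{1..l}. P a b \<and> (a, b) \<noteq> (r, c) \<longrightarrow>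
       (interval_subset \<rho>s \<rho> a \<and> b \<le> c) \<or> (interval_subset \<rho>t \<rho> a \<and> c \<le> b)"
proof -
  have "1 \<le> r" using rows by simp
  obtain \<rho> where \<rho>: "cut_seq k m \<rho>" "\<rho> (r - 1) < i" "i \<le> \<rho> r"
    and one: "\<And>a. a \<noteq> r \<Longrightarrow> interval_subset \<rho>s \<rho> a \<or> interval_subset \<rho>t \<rho> a"
    and left_top: "\<And>a. top_left \<Longrightarrow> a < r \<Longrightarrow> interval_subset \<rho>s \<rho> a"
    and both_top: "\<not> top_left \<Longrightarrow> 1 \<le> r1 - 1 \<Longrightarrow> r1 - 1 < r \<Longrightarrow>
           interval_subset \<rho>s \<rho> (r1 - 1) \<and> interval_subset \<rho>t \<rho> (r1 - 1)"
    and right_bottom: "\<And>a. bottom_right \<Longrightarrow> r < a \<Longrightarrow> interval_subset \<rho>t \<rho> a"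
    and both_bottom: "\<not> bottom_right \<Longrightarrow> r < r2 + 1 \<Longrightarrow>
           interval_subset \<rho>s \<rho> (r2 + 1) \<and> interval_subset \<rho>t \<rho> (r2 + 1)"
    by (rule merged_row_cuts[OF S T \<open>1 \<le> r\<close>, where h_top = "r1 - 1" and h_bot = "r2 + 1"
          and top_left = top_left and bottom_right = bottom_right]) (rule that)
  have "(interval_subset \<rho>s \<rho> a \<and> b \<le> c) \<or> (interval_subset \<rho>t \<rho> a \<and> c \<le> b)"
    if a: "a \<in> {1..k}" and b: "b \<in> {1..l}" and ab: "P a b" "(a, b) \<noteq> (r, c)" for a b
  proof (cases "b = c")
    case True
    then show ?thesis using one ab(2) by auto
  next
    case False
    then have "a \<notin> {r1..r2}" using band b ab(1) by blast
    then consider "a < r1" | "r2 < a" by fastforce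
    then show ?thesis
    proof cases
      case 1
      with bspec[OF bspec[OF top a] b] ab(1) False have "if top_left then b \<le> c else a = r1 - 1"
        by (auto split: if_splits)
      with 1 rows(2) a show ?thesis using left_top both_top by (cases top_left) auto
    next
      case 2
      with bspec[OF bspec[OF bottom a] b] ab(1) False have "if bottom_right then c \<le> b else a = r2 + 1"
        by (auto split: if_splits)
      with 2 rows(3) show ?thesis using right_bottom both_bottom by (cases bottom_right) auto
    qed
  qed
  with \<rho> show ?thesis using that by blast
qed

lemma no_one_between_critical_entries:
  assumes av: "avoids k l P m n M"
    and rows: "1 \<le> r1" "r1 \<le> r" "r \<le> r2" "r2 \<le> k" and col: "1 \<le> c" "c \<le> l"
    and band: "\<forall>a\<in>{r1..r2}. \<forall>b\<in>{1..l}. P a b \<longrightarrow> b = c"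
    and top: "\<forall>a\<in>{1..k}. \<forall>b\<in>{1..l}. P a b \<longrightarrow> a < r1 \<longrightarrow>
                (if top_left then b \<le> c else b = c \<or> a = r1 - 1)"
    and bottom: "\<forall>a\<in>{1..k}. \<forall>b\<in>{1..l}. P a b \<longrightarrow> r2 < a \<longrightarrow>
                (if bottom_right then c \<le> b else b = c \<or> a = r2 + 1)"
    and crit: "critical_entry k l P (r, c) m n M (i, j1)" "critical_entry k l P (r, c) m n M (i, j2)"
    and g: "j1 < g" "g < j2"
  shows "\<not> M i g"
proof
  assume "M i g"
  have rc: "(r, c) \<in> entries k l" using rows col by (auto simp: entries_def)
  obtain \<rho>s \<gamma>s \<rho>t \<gamma>t where S: "critical_grid k l P (r, c) m n M (i, j1) \<rho>s \<gamma>s"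
    and T: "critical_grid k l P (r, c) m n M (i, j2) \<rho>t \<gamma>t"
    using critical_entry_grid[OF av crit(1) rc] critical_entry_grid[OF av crit(2) rc] by blast
  have "cut_seq k m \<rho>s" "\<rho>s (r - 1) < i" "i \<le> \<rho>s r" "cut_seq k m \<rho>t" "\<rho>t (r - 1) < i" "i \<le> \<rho>t r"
    using S T unfolding critical_grid_def in_block_def by auto
  from covering_row_cuts[OF this rows(1-3) band top bottom]
  obtain \<rho> where "cut_seq k m \<rho>" "\<rho> (r - 1) < i" "i \<le> \<rho> r"
    and "\<forall>a\<in>{1..k}. \<forall>b\<in>{1..l}. P a b \<and> (a, b) \<noteq> (r, c) \<longrightarrow>
       (interval_subset \<rho>s \<rho> a \<and> b \<le> c) \<or> (interval_subset \<rho>t \<rho> a \<and> c \<le> b)" .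
  with merged_critical_grids_not_avoids[OF S T col g \<open>M i g\<close>] av show False by blast
qed

lemma hzero_runs_separated:
  assumes run1: "hzero_run m n M i a b" and run2: "hzero_run m n M i a' b'"
    and ne: "(a, b) \<noteq> (a', b')" and le: "a \<le> a'"
  shows "\<exists>g. b < g \<and> g < a' \<and> M i g"
proof (cases "a = a'")
  case True
  then have "b \<noteq> b'" using ne by auto
  then consider "b < b'" | "b' < b" by linarith
  then show ?thesis
  proof cases
    case 1
    then have "M i (b + 1)" using run1 run2 unfolding hzero_run_def by auto
    moreover have "b + 1 \<in> {a'..b'}" using 1 run1 True unfolding hzero_run_def by auto
    ultimately show ?thesis using run2 unfolding hzero_run_def by auto
  next
    case 2
    then have "M i (b' + 1)" using run1 run2 unfolding hzero_run_def by auto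
    moreover have "b' + 1 \<in> {a..b}" using 2 run2 True unfolding hzero_run_def by auto
    ultimately show ?thesis using run1 unfolding hzero_run_def by auto
  qed
next
  case False
  then have "a < a'" using le by auto
  then have "M i (a' - 1)" using run1 run2 unfolding hzero_run_def by auto
  moreover have "a' - 1 \<notin> {a..b}" if "M i (a' - 1)"
    using that run1 unfolding hzero_run_def by blast
  ultimately have "b + 1 < a'" using \<open>a < a'\<close> by auto
  moreover from this have "M i (b + 1)" using run1 run2 unfolding hzero_run_def by auto
  ultimately show ?thesis by auto
qed

lemma card_critical_runs_le_one:
  assumes separated: "\<And>j1 j2 g. critical_entry k l P e m n M (i, j1) \<Longrightarrow>
      critical_entry k l P e m n M (i, j2) \<Longrightarrow> j1 < g \<Longrightarrow> g < j2 \<Longrightarrow> \<not> M i g"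
  shows "card (critical_runs k l P e m n M i) \<le> 1"
proof -
  have "x = y" if runs: "x \<in> critical_runs k l P e m n M i" "y \<in> critical_runs k l P e m n M i"
    and le: "fst x \<le> fst y" for x y
  proof (rule ccontr)
    assume "x \<noteq> y"
    obtain a b a' b' where xy: "x = (a, b)" "y = (a', b')" by fastforce
    obtain j j' where "j \<in> {a..b}" "critical_entry k l P e m n M (i, j)" "hzero_run m n M i a b"
      and "j' \<in> {a'..b'}" "critical_entry k l P e m n M (i, j')" "hzero_run m n M i a' b'"
      using runs unfolding xy critical_runs_def by auto
    moreover obtain g where "b < g" "g < a'" "M i g"
      using hzero_runs_separated[of m n M i a b a' b'] \<open>x \<noteq> y\<close> le calculation unfolding xy by auto
    ultimately show False using separated[of j j' g] by auto
  qed
  then have "\<forall>x\<in>critical_runs k l P e m n M i. \<forall>y\<in>critical_runs k l P e m n M i. x = y"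
    by (metis nat_le_linear)
  then show ?thesis
    by (cases "finite (critical_runs k l P e m n M i)") (auto simp: card_le_Suc0_iff_eq)
qed

lemma row_bounding_band_entry:
  assumes rows: "1 \<le> r1" "r1 \<le> r" "r \<le> r2" "r2 \<le> k" and col: "1 \<le> c" "c \<le> l"
    and band: "\<forall>a\<in>{r1..r2}. \<forall>b\<in>{1..l}. P a b \<longrightarrow> b = c"
    and top: "\<forall>a\<in>{1..k}. \<forall>b\<in>{1..l}. P a b \<longrightarrow> a < r1 \<longrightarrow>
                (if top_left then b \<le> c else b = c \<or> a = r1 - 1)"
    and bottom: "\<forall>a\<in>{1..k}. \<forall>b\<in>{1..l}. P a b \<longrightarrow> r2 < a \<longrightarrow>
                (if bottom_right then c \<le> b else b = c \<or> a = r2 + 1)"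
  shows "row_bounding k l P (r, c)"
  unfolding row_bounding_def
proof (intro exI[of _ 1] allI impI ballI)
  fix m n M i assume "avoids k l P m n M"
  then show "card (critical_runs k l P (r, c) m n M i) \<le> 1"
    by (rule card_critical_runs_le_one[OF no_one_between_critical_entries[OF _ rows col band top bottom]])
qed

theorem lemma3p11:
  fixes k l r1 r2 c :: nat and P :: "nat \<Rightarrow> nat \<Rightarrow> bool"
  assumes rows: "1 \<le> r1" "r1 \<le> r2" "r2 \<le> k"
    and col: "1 \<le> c" "c \<le> l"
    and empty_band: "\<forall>r\<in>{r1..r2}. \<forall>j\<in>{1..l}. P r j \<longrightarrow> j = c"
    and types:
      "(\<forall>i\<in>{1..k}. \<forall>j\<in>{1..l}. P i j \<longrightarrow>
           (i < r1 \<longrightarrow> j = c \<or> i = r1 - 1) \<and> (r2 < i \<longrightarrow> j = c \<or> i = r2 + 1))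
     \<or> (\<forall>i\<in>{1..k}. \<forall>j\<in>{1..l}. P i j \<longrightarrow>
           (i < r1 \<longrightarrow> j = c \<or> i = r1 - 1) \<and> (r2 < i \<longrightarrow> c \<le> j))
     \<or> (\<forall>i\<in>{1..k}. \<forall>j\<in>{1..l}. P i j \<longrightarrow>
           (i < r1 \<longrightarrow> j \<le> c) \<and> (r2 < i \<longrightarrow> c \<le> j))"
  shows "\<forall>r\<in>{r1..r2}. P r c \<longrightarrow> row_bounding k l P (r, c)"
proof (intro ballI impI)
  fix r assume "r \<in> {r1..r2}"
  then have band_rows: "1 \<le> r1" "r1 \<le> r" "r \<le> r2" "r2 \<le> k" using rows by auto
  from types show "row_bounding k l P (r, c)"
  proof (elim disjE)
    assume "\<forall>i\<in>{1..k}. \<forall>j\<in>{1..l}. P i j \<longrightarrow>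
        (i < r1 \<longrightarrow> j = c \<or> i = r1 - 1) \<and> (r2 < i \<longrightarrow> j = c \<or> i = r2 + 1)"
    then show ?thesis
      by (intro row_bounding_band_entry[OF band_rows col empty_band, of False False]) auto
  next
    assume "\<forall>i\<in>{1..k}. \<forall>j\<in>{1..l}. P i j \<longrightarrow>
        (i < r1 \<longrightarrow> j = c \<or> i = r1 - 1) \<and> (r2 < i \<longrightarrow> c \<le> j)"
    then show ?thesis
      by (intro row_bounding_band_entry[OF band_rows col empty_band, of False True]) auto
  next
    assume "\<forall>i\<in>{1..k}. \<forall>j\<in>{1..l}. P i j \<longrightarrow> (i < r1 \<longrightarrow> j \<le> c) \<and> (r2 < i \<longrightarrow> c \<le> j)"
    then show ?thesis
      by (intro row_bounding_band_entry[OF band_rows col empty_band, of True True]) auto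
  qed
qed

end
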